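(* Let $P$ be a poset, $\mathcal{U}$ a join-specification for $P$, and $S\subseteq P$. Then $\Upsilon_{\mathcal{U}}(S)$ is the smallest $\mathcal{U}$-ideal containing $S$ if and only if $\Upsilon_{\mathcal{U}}(S)$ is down-closed.
   Context: For $S\subseteq P$, $S^\downarrow=\{p\in P:p\le s\text{ for some }s\in S\}$. A join-specification for $P$ is a set $\mathcal{U}\subseteq\wp(P)$ such that $\bigvee S$ exists in $P$ for every $S\in\mathcal{U}$ and $\{p\}\in\mathcal{U}$ for every $p\in P$. A $\mathcal{U}$-ideal is a down-closed $C\subseteq P$ with $\bigvee S\in C$ whenever $S\in\mathcal{U}$, $S\subseteq C$; $\Gamma_{\mathcal{U}}(S)$ is the smallest $\mathcal{U}$-ideal containing $S$. $\mathcal{U}^+=\{S\subseteq P:\bigvee S\text{ exists and }\bigvee S\in\Gamma_{\mathcal{U}}(S)\}$, and $\Upsilon_{\mathcal{U}}(S)=\{\bigvee T:T\in\mathcal{U}^+,\ T\subseteq S^\downarrow\}$. *)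

theory Defs
  imports Main
begin

text \<open>The poset P is the carrier type 'a with its partial order (class order).\<close>

definition is_join :: "'a::order set \<Rightarrow> 'a \<Rightarrow> bool" where
  "is_join S x \<longleftrightarrow> (\<forall>s\<in>S. s \<le> x) \<and> (\<forall>y. (\<forall>s\<in>S. s \<le> y) \<longrightarrow> x \<le> y)"

definition has_join :: "'a::order set \<Rightarrow> bool" where
  "has_join S \<longleftrightarrow> (\<exists>x. is_join S x)"

definition join :: "'a::order set \<Rightarrow> 'a" where
  "join S = (THE x. is_join S x)"

definition join_spec :: "'a::order set set \<Rightarrow> bool" where
  "join_spec U \<longleftrightarrow> (\<forall>S\<in>U. has_join S) \<and> (\<forall>p. {p} \<in> U)"

definition down_closed :: "'a::order set \<Rightarrow> bool" where
  "down_closed C \<longleftrightarrow> (\<forall>x y. y \<in> C \<longrightarrow> x \<le> y \<longrightarrow> x \<in> C)"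

definition U_ideal :: "'a::order set set \<Rightarrow> 'a set \<Rightarrow> bool" where
  "U_ideal U C \<longleftrightarrow> down_closed C \<and> (\<forall>S\<in>U. S \<subseteq> C \<longrightarrow> join S \<in> C)"

definition Gamma :: "'a::order set set \<Rightarrow> 'a set \<Rightarrow> 'a set" where
  "Gamma U S = \<Inter>{C. U_ideal U C \<and> S \<subseteq> C}"

definition Uplus :: "'a::order set set \<Rightarrow> 'a set set" where
  "Uplus U = {S. has_join S \<and> join S \<in> Gamma U S}"

definition down :: "'a::order set \<Rightarrow> 'a set" where
  "down S = {p. \<exists>s\<in>S. p \<le> s}"

definition Upsilon :: "'a::order set set \<Rightarrow> 'a set \<Rightarrow> 'a set" where
  "Upsilon U S = {join T | T. T \<in> Uplus U \<and> T \<subseteq> down S}"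

end

theory Submission
  imports Defs
begin

text \<open>
  Upsilon(S) always contains S and lies inside every U-ideal C containing S: for T in U+
  with T below S, C contains T, hence Gamma(T), hence the join of T. It is also closed under
  joins of members of U: if each element x of S' in U is the join of some T_x in U+, then
  the union T of the T_x has the same join as S', and this join lies in Gamma(T) because
  Gamma(T) contains each Gamma(T_x), which contains x. So down-closure is the only
  property of a U-ideal that Upsilon(S) may lack.
\<close>

lemma is_join_unique: "is_join S x \<Longrightarrow> is_join S y \<Longrightarrow> x = (y::'a::order)"
  unfolding is_join_def by (meson order_antisym)

lemma join_eqI: "is_join S x \<Longrightarrow> join S = x"
  unfolding join_def using is_join_unique by blast

lemma is_join_join: "has_join S \<Longrightarrow> is_join S (join S)"
  unfolding has_join_def using join_eqI by metis

lemma join_singleton [simp]: "join {p} = p"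
  by (rule join_eqI) (simp add: is_join_def)

lemma is_join_UN:
  fixes f :: "'a \<Rightarrow> 'a::order set"
  assumes "\<And>x. x \<in> A \<Longrightarrow> is_join (f x) x" and "is_join A y"
  shows "is_join (\<Union>(f ` A)) y"
  unfolding is_join_def
proof safe
  fix x t assume x: "x \<in> A" and t: "t \<in> f x"
  have "t \<le> x" using assms(1)[OF x] t unfolding is_join_def by blast
  also have "x \<le> y" using assms(2) x unfolding is_join_def by blast
  finally show "t \<le> y" .
next
  fix z assume z: "\<forall>t\<in>\<Union>(f ` A). t \<le> z"
  have "x \<le> z" if x: "x \<in> A" for x
  proof -
    have "\<forall>t\<in>f x. t \<le> z" using z x by blast
    then show ?thesis using assms(1)[OF x] unfolding is_join_def by blast
  qed
  then show "y \<le> z" using assms(2) unfolding is_join_def by blast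
qed

lemma mem_Gamma_iff: "x \<in> Gamma U T \<longleftrightarrow> (\<forall>C. U_ideal U C \<and> T \<subseteq> C \<longrightarrow> x \<in> C)"
  unfolding Gamma_def by blast

lemma Gamma_least: "U_ideal U C \<Longrightarrow> T \<subseteq> C \<Longrightarrow> Gamma U T \<subseteq> C"
  unfolding Gamma_def by blast

lemma singleton_in_Uplus: "{p} \<in> Uplus U"
  unfolding Uplus_def has_join_def mem_Gamma_iff
  using join_singleton[of p] by (auto simp: is_join_def)

lemma UN_in_Uplus:
  fixes f :: "'a \<Rightarrow> 'a::order set"
  assumes S': "S' \<in> U" "has_join S'"
    and f: "\<And>x. x \<in> S' \<Longrightarrow> f x \<in> Uplus U \<and> join (f x) = x"
  shows "\<Union>(f ` S') \<in> Uplus U \<and> join (\<Union>(f ` S')) = join S'"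
proof -
  have "is_join (f x) x" if "x \<in> S'" for x
    using f[OF that] is_join_join[of "f x"] unfolding Uplus_def by auto
  then have join_UN: "is_join (\<Union>(f ` S')) (join S')"
    using is_join_UN is_join_join[OF S'(2)] by blast
  have "join S' \<in> C" if C: "U_ideal U C" "\<Union>(f ` S') \<subseteq> C" for C
  proof -
    have "x \<in> C" if "x \<in> S'" for x
    proof -
      have "f x \<subseteq> C" using C(2) that by blast
      then have "Gamma U (f x) \<subseteq> C" by (rule Gamma_least[OF C(1)])
      moreover have "x \<in> Gamma U (f x)" using f[OF that] unfolding Uplus_def by auto
      ultimately show ?thesis by blast
    qed
    then show ?thesis using C(1) S'(1) unfolding U_ideal_def by blast
  qed
  then show ?thesis
    using join_UN join_eqI[OF join_UN] unfolding Uplus_def has_join_def mem_Gamma_iff by auto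
qed

lemma subset_Upsilon: "S \<subseteq> Upsilon U S"
proof
  fix s assume "s \<in> S"
  then have "{s} \<subseteq> down S" by (auto simp: down_def)
  with singleton_in_Uplus show "s \<in> Upsilon U S"
    unfolding Upsilon_def by (metis (mono_tags, lifting) join_singleton mem_Collect_eq)
qed

lemma Upsilon_subset_U_ideal:
  assumes C: "U_ideal U C" "S \<subseteq> C"
  shows "Upsilon U S \<subseteq> C"
proof
  fix x assume "x \<in> Upsilon U S"
  then obtain T where T: "x = join T" "T \<in> Uplus U" "T \<subseteq> down S"
    unfolding Upsilon_def by blast
  have "T \<subseteq> C" using T(3) C unfolding down_def U_ideal_def down_closed_def by blast
  then show "x \<in> C" using T Gamma_least[OF C(1)] unfolding Uplus_def by blast
qed

lemma join_in_Upsilon: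
  assumes "join_spec U" and S': "S' \<in> U" "S' \<subseteq> Upsilon U S"
  shows "join S' \<in> Upsilon U S"
proof -
  obtain f where f: "\<And>x. x \<in> S' \<Longrightarrow> f x \<in> Uplus U \<and> join (f x) = x \<and> f x \<subseteq> down S"
    using S'(2) unfolding Upsilon_def by (simp add: subset_iff) metis
  have "has_join S'" using assms unfolding join_spec_def by blast
  with S'(1) f have "\<Union>(f ` S') \<in> Uplus U \<and> join (\<Union>(f ` S')) = join S'"
    by (intro UN_in_Uplus) auto
  moreover have "\<Union>(f ` S') \<subseteq> down S" using f by blast
  ultimately show ?thesis unfolding Upsilon_def by (auto intro!: exI[of _ "\<Union>(f ` S')"])
qed

theorem lemma3p6:
  fixes U :: "'a::order set set" and S :: "'a set"
  assumes "join_spec U"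
  shows "(U_ideal U (Upsilon U S) \<and> S \<subseteq> Upsilon U S \<and>
          (\<forall>C. U_ideal U C \<and> S \<subseteq> C \<longrightarrow> Upsilon U S \<subseteq> C))
         \<longleftrightarrow> down_closed (Upsilon U S)"
proof
  assume "U_ideal U (Upsilon U S) \<and> S \<subseteq> Upsilon U S \<and>
          (\<forall>C. U_ideal U C \<and> S \<subseteq> C \<longrightarrow> Upsilon U S \<subseteq> C)"
  then show "down_closed (Upsilon U S)" unfolding U_ideal_def by blast
next
  assume "down_closed (Upsilon U S)"
  with join_in_Upsilon[OF assms] have "U_ideal U (Upsilon U S)"
    unfolding U_ideal_def by blast
  with subset_Upsilon Upsilon_subset_U_ideal
  show "U_ideal U (Upsilon U S) \<and> S \<subseteq> Upsilon U S \<and>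
          (\<forall>C. U_ideal U C \<and> S \<subseteq> C \<longrightarrow> Upsilon U S \<subseteq> C)"
    by blast
qed

end
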